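(* Let $p$ be a prime, $c\ge1$, $G$ a finite $p$-group, $B$ a cyclic subgroup of $Z(G)$ of order $p^k$, and suppose $A=G/B$ is generated by $d$ elements. Let $G\cong F/R$ with $F$ free, and let $S$ be the normal subgroup of $F$ containing $R$ with $B=S/R$ (so $A\cong F/S$). Then $$\left|\,[S,{}_cF]/[R,{}_cF]\,\right|\le p^{dk(d+1)^{c-1}}.$$
   Context: For subgroups $U,V$ of a group, $[U,{}_0V]=U$ and $[U,{}_{i+1}V]=[[U,{}_iV],V]$. *)

theory Defs
  imports "HOL-Algebra.Algebra"
begin

definition center :: "('a, 'b) monoid_scheme \<Rightarrow> 'a set" where
  "center G = {z \<in> carrier G. \<forall>g \<in> carrier G. z \<otimes>\<^bsub>G\<^esub> g = g \<otimes>\<^bsub>G\<^esub> z}"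

definition comm_subgroup :: "('a, 'b) monoid_scheme \<Rightarrow> 'a set \<Rightarrow> 'a set \<Rightarrow> 'a set" where
  "comm_subgroup G U V = generate G
     {inv\<^bsub>G\<^esub> x \<otimes>\<^bsub>G\<^esub> inv\<^bsub>G\<^esub> y \<otimes>\<^bsub>G\<^esub> x \<otimes>\<^bsub>G\<^esub> y | x y. x \<in> U \<and> y \<in> V}"

fun iter_comm :: "('a, 'b) monoid_scheme \<Rightarrow> 'a set \<Rightarrow> nat \<Rightarrow> 'a set \<Rightarrow> 'a set" where
  "iter_comm G U 0 V = U"
| "iter_comm G U (Suc i) V = comm_subgroup G (iter_comm G U i V) V"

text \<open>Words over X and their inverses: (True, x) stands for x, (False, x) for x^-1.\<close>
definition word_eval :: "('a, 'b) monoid_scheme \<Rightarrow> (bool \<times> 'a) list \<Rightarrow> 'a" where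
  "word_eval G w = foldr (\<lambda>(b, x) acc. (if b then x else inv\<^bsub>G\<^esub> x) \<otimes>\<^bsub>G\<^esub> acc) w \<one>\<^bsub>G\<^esub>"

definition reduced_word :: "(bool \<times> 'a) list \<Rightarrow> bool" where
  "reduced_word w = (\<forall>i. Suc i < length w \<longrightarrow>
      \<not> (snd (w ! i) = snd (w ! Suc i) \<and> fst (w ! i) \<noteq> fst (w ! Suc i)))"

definition free_group_on :: "('a, 'b) monoid_scheme \<Rightarrow> 'a set \<Rightarrow> bool" where
  "free_group_on F Y \<longleftrightarrow> group F \<and> Y \<subseteq> carrier F \<and> generate F Y = carrier F \<and>
     (\<forall>w. length w > 0 \<and> set (map snd w) \<subseteq> Y \<and> reduced_word w \<longrightarrow> word_eval F w \<noteq> one F)"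

definition free_group :: "('a, 'b) monoid_scheme \<Rightarrow> bool" where
  "free_group F \<longleftrightarrow> (\<exists>Y. free_group_on F Y)"

end

theory Submission
  imports Defs
begin

text \<open>
  We show
  \<open>|[S,\<^sub>cF]/[R,\<^sub>cF]| \<le> p\<^sup>d\<^sup>k\<^sup>(\<^sup>d\<^sup>+\<^sup>1\<^sup>)\<^sup>^\<^sup>(\<^sup>c\<^sup>-\<^sup>1\<^sup>)\<close> for \<open>c \<ge> 1\<close>.

  The key tool is a counting lemma: if \<open>U \<le> T\<close> and \<open>[T,G] \<le> U\<close>, then modulo \<open>[U,G]\<close> the map
  \<open>(t, a) \<mapsto> [t,a]\<close> is bimultiplicative, central-valued and depends only on \<open>Ut\<close>.  Hence if \<open>G\<close> is
  generated by a set \<open>K\<close> with \<open>[T,K] \<le> [U,G]\<close> together with \<open>e\<close> elements \<open>g\<^sub>i\<close>, every element of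
  \<open>[T,G]/[U,G]\<close> is a product \<open>\<Prod> [t\<^sub>i,g\<^sub>i]\<close>, so \<open>|[T,G]/[U,G]| \<le> |T/U|\<^sup>e\<close>.

  Iterating it gives the core estimate \<open>iter_comm_quotient_card_le\<close>: the
  first step uses \<open>K = S\<close> (as \<open>S/R\<close> is cyclic, \<open>[S,S] \<le> [R,F]\<close>) and the \<open>d\<close> lifted generators of
  \<open>G/B\<close>; each later step uses \<open>K = R\<close> and these \<open>d\<close> generators plus a generator \<open>s\<^sub>0\<close> of \<open>S\<close>
  modulo \<open>R\<close>, raising the bound to the power \<open>d + 1\<close>.
\<close>

definition commutator :: "('a, 'b) monoid_scheme \<Rightarrow> 'a \<Rightarrow> 'a \<Rightarrow> 'a" where
  "commutator G x y = inv\<^bsub>G\<^esub> x \<otimes>\<^bsub>G\<^esub> inv\<^bsub>G\<^esub> y \<otimes>\<^bsub>G\<^esub> x \<otimes>\<^bsub>G\<^esub> y"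

lemma comm_subgroup_eq:
  "comm_subgroup G U V = generate G {commutator G x y | x y. x \<in> U \<and> y \<in> V}"
  unfolding comm_subgroup_def commutator_def by simp

context group
begin

lemma mult_inv_cancel: "x \<in> carrier G \<Longrightarrow> y \<in> carrier G \<Longrightarrow> x \<otimes> (inv x \<otimes> y) = y"
  by (simp add: m_assoc [symmetric])

lemma inv_mult_cancel: "x \<in> carrier G \<Longrightarrow> y \<in> carrier G \<Longrightarrow> inv x \<otimes> (x \<otimes> y) = y"
  by (simp add: m_assoc [symmetric])

lemmas word_simps = m_assoc inv_mult_group mult_inv_cancel inv_mult_cancel

lemma commutator_closed [simp]:
  "x \<in> carrier G \<Longrightarrow> y \<in> carrier G \<Longrightarrow> commutator G x y \<in> carrier G"
  by (simp add: commutator_def)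

lemma commutator_eq_one_iff:
  assumes [simp]: "x \<in> carrier G" "y \<in> carrier G"
  shows "commutator G x y = \<one> \<longleftrightarrow> x \<otimes> y = y \<otimes> x"
proof -
  have "commutator G x y = inv (y \<otimes> x) \<otimes> (x \<otimes> y)"
    by (simp add: commutator_def word_simps)
  then show ?thesis by (simp add: inv_solve_left')
qed

lemma inv_commutator:
  "x \<in> carrier G \<Longrightarrow> y \<in> carrier G \<Longrightarrow> inv (commutator G x y) = commutator G y x"
  by (simp add: commutator_def word_simps)

lemma commutator_mult_left:
  "x \<in> carrier G \<Longrightarrow> y \<in> carrier G \<Longrightarrow> a \<in> carrier G \<Longrightarrow>
    commutator G (x \<otimes> y) a = (inv y \<otimes> commutator G x a \<otimes> y) \<otimes> commutator G y a"
  by (simp add: commutator_def word_simps)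

lemma commutator_mult_right:
  "t \<in> carrier G \<Longrightarrow> a \<in> carrier G \<Longrightarrow> b \<in> carrier G \<Longrightarrow>
    commutator G t (a \<otimes> b) = commutator G t b \<otimes> (inv b \<otimes> commutator G t a \<otimes> b)"
  by (simp add: commutator_def word_simps)

lemma commutator_inv_left:
  "x \<in> carrier G \<Longrightarrow> z \<in> carrier G \<Longrightarrow>
    commutator G (inv x) z = x \<otimes> inv (commutator G x z) \<otimes> inv x"
  by (simp add: commutator_def word_simps)

lemma commutator_one_right [simp]: "x \<in> carrier G \<Longrightarrow> commutator G x \<one> = \<one>"
  by (simp add: commutator_def)

lemma hall_witt:
  assumes "x \<in> carrier G" "y \<in> carrier G" "z \<in> carrier G"
  shows "(y \<otimes> commutator G (commutator G x y) z \<otimes> inv y)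
     \<otimes> (inv z \<otimes> commutator G (commutator G (inv y) (inv z)) x \<otimes> z)
     \<otimes> (inv x \<otimes> commutator G (commutator G z (inv x)) (inv y) \<otimes> x) = \<one>"
  using assms by (simp add: commutator_def word_simps)

lemma comm_subgroup_is_subgroup:
  "U \<subseteq> carrier G \<Longrightarrow> V \<subseteq> carrier G \<Longrightarrow> subgroup (comm_subgroup G U V) G"
  unfolding comm_subgroup_eq by (rule generate_is_subgroup) (blast intro: commutator_closed)

lemma commutator_in_comm_subgroup:
  "x \<in> U \<Longrightarrow> y \<in> V \<Longrightarrow> commutator G x y \<in> comm_subgroup G U V"
  unfolding comm_subgroup_eq by (rule generate.incl) auto

lemma comm_subgroup_least:
  assumes "subgroup H G" and "\<And>x y. x \<in> U \<Longrightarrow> y \<in> V \<Longrightarrow> commutator G x y \<in> H"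
  shows "comm_subgroup G U V \<subseteq> H"
  unfolding comm_subgroup_eq using assms by (intro generate_subgroup_incl) auto

lemma comm_subgroup_mono:
  "U \<subseteq> U' \<Longrightarrow> V \<subseteq> V' \<Longrightarrow> comm_subgroup G U V \<subseteq> comm_subgroup G U' V'"
  unfolding comm_subgroup_eq by (rule mono_generate) blast

lemma comm_subgroup_sym:
  assumes "U \<subseteq> carrier G" "V \<subseteq> carrier G"
  shows "comm_subgroup G U V = comm_subgroup G V U"
proof -
  have "comm_subgroup G A A' \<subseteq> comm_subgroup G A' A"
    if "A \<subseteq> carrier G" "A' \<subseteq> carrier G" for A A'
  proof (rule comm_subgroup_least)
    show sub: "subgroup (comm_subgroup G A' A) G" using that by (rule comm_subgroup_is_subgroup[rotated])
    fix x y assume "x \<in> A" "y \<in> A'"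
    then have "inv (commutator G y x) \<in> comm_subgroup G A' A"
      by (intro subgroup.m_inv_closed[OF sub] commutator_in_comm_subgroup)
    then show "commutator G x y \<in> comm_subgroup G A' A"
      using \<open>x \<in> A\<close> \<open>y \<in> A'\<close> that by (subst (asm) inv_commutator) auto
  qed
  then show ?thesis using assms by blast
qed

lemma generate_normalI:
  assumes H: "H \<subseteq> carrier G"
    and conj: "\<And>h g. h \<in> H \<Longrightarrow> g \<in> carrier G \<Longrightarrow> g \<otimes> h \<otimes> inv g \<in> generate G H"
  shows "generate G H \<lhd> G"
proof -
  let ?K = "generate G H"
  have K: "subgroup ?K G" using H by (rule generate_is_subgroup)
  define C where "C = {x \<in> carrier G. \<forall>g \<in> carrier G. g \<otimes> x \<otimes> inv g \<in> ?K}"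
  have "subgroup C G"
  proof (rule subgroupI)
    show "C \<subseteq> carrier G" by (auto simp: C_def)
    show "C \<noteq> {}" using subgroup.one_closed[OF K] by (auto simp: C_def)
  next
    fix x assume x: "x \<in> C"
    have "g \<otimes> inv x \<otimes> inv g = inv (g \<otimes> x \<otimes> inv g)" if "g \<in> carrier G" for g
      using x that by (simp add: C_def word_simps)
    then show "inv x \<in> C" using x subgroup.m_inv_closed[OF K] by (auto simp: C_def)
  next
    fix x y assume x: "x \<in> C" and y: "y \<in> C"
    have "g \<otimes> (x \<otimes> y) \<otimes> inv g = (g \<otimes> x \<otimes> inv g) \<otimes> (g \<otimes> y \<otimes> inv g)" if "g \<in> carrier G" for g
      using x y that by (simp add: C_def word_simps)
    then show "x \<otimes> y \<in> C" using x y subgroup.m_closed[OF K] by (auto simp: C_def)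
  qed
  moreover have "H \<subseteq> C" using H conj by (auto simp: C_def)
  ultimately have "?K \<subseteq> C" by (rule generate_subgroup_incl[rotated])
  then show ?thesis
    using K by (intro normal_invI) (auto simp: C_def)
qed

lemma comm_subgroup_normal:
  assumes U: "U \<subseteq> carrier G"
  shows "comm_subgroup G U (carrier G) \<lhd> G"
  unfolding comm_subgroup_eq
proof (rule generate_normalI)
  show "{commutator G x y |x y. x \<in> U \<and> y \<in> carrier G} \<subseteq> carrier G" using U by auto
  fix c g assume "c \<in> {commutator G x y |x y. x \<in> U \<and> y \<in> carrier G}" and g: "g \<in> carrier G"
  then obtain x f where x: "x \<in> U" and f: "f \<in> carrier G" and c: "c = commutator G x f" by auto
  let ?K = "generate G {commutator G x y |x y. x \<in> U \<and> y \<in> carrier G}"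
  have K: "subgroup ?K G" using U by (intro generate_is_subgroup) auto
  have "g \<otimes> c \<otimes> inv g = inv (commutator G x (inv g)) \<otimes> commutator G x (f \<otimes> inv g)"
    using x f g U c by (auto simp: commutator_def word_simps)
  moreover have "commutator G x (inv g) \<in> ?K" "commutator G x (f \<otimes> inv g) \<in> ?K"
    using x f g by (auto intro!: generate.incl)
  ultimately show "g \<otimes> c \<otimes> inv g \<in> ?K"
    using K by (simp add: subgroup.m_closed subgroup.m_inv_closed)
qed

lemma commutes_modulo_subgroup:
  assumes N: "N \<lhd> G" and Z: "Z \<subseteq> carrier G"
  shows "subgroup {w \<in> carrier G. \<forall>z \<in> Z. commutator G w z \<in> N} G"
proof (rule subgroupI)
  interpret N: normal N G by (rule N)
  have N_sub: "subgroup N G" by (rule N.subgroup_axioms)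
  show "{w \<in> carrier G. \<forall>z \<in> Z. commutator G w z \<in> N} \<noteq> {}"
    using Z N.one_closed by (auto simp: commutator_def subset_iff intro!: exI[of _ \<one>])
  fix a b assume a: "a \<in> {w \<in> carrier G. \<forall>z \<in> Z. commutator G w z \<in> N}"
    and b: "b \<in> {w \<in> carrier G. \<forall>z \<in> Z. commutator G w z \<in> N}"
  show "inv a \<in> {w \<in> carrier G. \<forall>z \<in> Z. commutator G w z \<in> N}"
    using a Z by (auto simp: commutator_inv_left subset_iff
        intro!: N.inv_op_closed2 subgroup.m_inv_closed[OF N_sub])
  show "a \<otimes> b \<in> {w \<in> carrier G. \<forall>z \<in> Z. commutator G w z \<in> N}"
    using a b Z by (auto simp: commutator_mult_left subset_iff
        intro!: subgroup.m_closed[OF N_sub, of "inv b \<otimes> _ \<otimes> b"] N.inv_op_closed1)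
qed auto

text \<open>It follows from the Hall--Witt identity.\<close>
lemma three_subgroup:
  assumes H: "subgroup H G" and K: "subgroup K G" and L: "subgroup L G" and N: "N \<lhd> G"
    and KLH: "comm_subgroup G (comm_subgroup G K L) H \<subseteq> N"
    and LHK: "comm_subgroup G (comm_subgroup G L H) K \<subseteq> N"
  shows "comm_subgroup G (comm_subgroup G H K) L \<subseteq> N"
proof -
  interpret N: normal N G by (rule N)
  have Lc: "L \<subseteq> carrier G" using L by (rule subgroup.subset)
  let ?M = "{w \<in> carrier G. \<forall>z \<in> L. commutator G w z \<in> N}"
  have "comm_subgroup G H K \<subseteq> ?M"
  proof (rule comm_subgroup_least[OF commutes_modulo_subgroup[OF N Lc]], safe)
    fix x y assume x: "x \<in> H" and y: "y \<in> K"
    have [simp]: "x \<in> carrier G" "y \<in> carrier G"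
      using subgroup.mem_carrier[OF H x] subgroup.mem_carrier[OF K y] .
    show "commutator G x y \<in> carrier G" by simp
    fix z assume z: "z \<in> L"
    have [simp]: "z \<in> carrier G" using z Lc by auto
    let ?A = "y \<otimes> commutator G (commutator G x y) z \<otimes> inv y"
    let ?B = "inv z \<otimes> commutator G (commutator G (inv y) (inv z)) x \<otimes> z"
    let ?C = "inv x \<otimes> commutator G (commutator G z (inv x)) (inv y) \<otimes> x"
    have "commutator G (commutator G (inv y) (inv z)) x \<in> N"
      using KLH x y z K L
      by (auto intro!: commutator_in_comm_subgroup simp: subgroup.m_inv_closed)
    then have B: "?B \<in> N" by (simp add: N.inv_op_closed1)
    have "commutator G (commutator G z (inv x)) (inv y) \<in> N"
      using LHK x y z H K
      by (auto intro!: commutator_in_comm_subgroup simp: subgroup.m_inv_closed)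
    then have C: "?C \<in> N" by (simp add: N.inv_op_closed1)
    have "?A = inv (?B \<otimes> ?C)"
      using hall_witt[of x y z] by (intro inv_equality[symmetric]) (simp_all add: m_assoc)
    then have "?A \<in> N" using B C by simp
    then have "inv y \<otimes> ?A \<otimes> y \<in> N" by (simp add: N.inv_op_closed1)
    then show "commutator G (commutator G x y) z \<in> N"
      by (simp add: word_simps)
  qed
  then show ?thesis
    by (intro comm_subgroup_least[OF N.subgroup_axioms]) blast
qed

lemma iter_comm_subgroup:
  "subgroup H G \<Longrightarrow> subgroup (iter_comm G H j (carrier G)) G"
proof (induction j)
  case (Suc j)
  then show ?case by (simp add: comm_subgroup_is_subgroup subgroup.subset)
qed simp

lemma iter_comm_normal:
  assumes "subgroup H G" shows "iter_comm G H (Suc j) (carrier G) \<lhd> G"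
  using iter_comm_subgroup[OF assms] by (simp add: comm_subgroup_normal subgroup.subset)

lemma iter_comm_mono:
  "H \<subseteq> K \<Longrightarrow> iter_comm G H j (carrier G) \<subseteq> iter_comm G K j (carrier G)"
  by (induction j) (simp_all add: comm_subgroup_mono)

lemma iter_comm_Suc_le:
  "comm_subgroup G S (carrier G) \<subseteq> R \<Longrightarrow>
    iter_comm G S (Suc j) (carrier G) \<subseteq> iter_comm G R j (carrier G)"
  by (induction j) (simp_all add: comm_subgroup_mono)

text \<open>Induction on \<open>j\<close>, the step being the Three Subgroup Lemma.\<close>
lemma comm_iter_comm_le:
  assumes S: "subgroup S G" and R: "subgroup R G"
  shows "comm_subgroup G (iter_comm G S j (carrier G)) (iter_comm G R i (carrier G))
           \<subseteq> iter_comm G R (i + j + 1) (carrier G)"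
proof -
  let ?T = "\<lambda>j. iter_comm G S j (carrier G)" and ?U = "\<lambda>i. iter_comm G R i (carrier G)"
  have Tc: "?T j \<subseteq> carrier G" for j using iter_comm_subgroup[OF S] by (rule subgroup.subset)
  have Uc: "?U i \<subseteq> carrier G" for i using iter_comm_subgroup[OF R] by (rule subgroup.subset)
  show ?thesis
  proof (induction j arbitrary: i)
    case 0
    have "comm_subgroup G S (?U i) = comm_subgroup G (?U i) S"
      using Uc subgroup.subset[OF S] by (rule comm_subgroup_sym[symmetric])
    also have "\<dots> \<subseteq> comm_subgroup G (?U i) (carrier G)"
      using subgroup.subset[OF S] by (intro comm_subgroup_mono) auto
    finally show ?case by simp
  next
    case (Suc j)
    have U_Suc: "comm_subgroup G (carrier G) (?U i) = ?U (Suc i)"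
      using Uc by (simp add: comm_subgroup_sym)
    have "comm_subgroup G (comm_subgroup G (carrier G) (?U i)) (?T j)
            = comm_subgroup G (?T j) (?U (Suc i))"
      unfolding U_Suc by (rule comm_subgroup_sym[OF Uc Tc])
    also have "\<dots> \<subseteq> ?U (i + Suc j + 1)" using Suc.IH[of "Suc i"] by simp
    finally have GUT: "comm_subgroup G (comm_subgroup G (carrier G) (?U i)) (?T j) \<subseteq> ?U (i + Suc j + 1)" .
    have "comm_subgroup G (?U i) (?T j) \<subseteq> ?U (i + j + 1)"
      using Suc.IH[of i] Tc Uc by (simp add: comm_subgroup_sym)
    then have UTG: "comm_subgroup G (comm_subgroup G (?U i) (?T j)) (carrier G) \<subseteq> ?U (i + Suc j + 1)"
      by (simp add: comm_subgroup_mono)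
    have "comm_subgroup G (comm_subgroup G (?T j) (carrier G)) (?U i) \<subseteq> ?U (i + Suc j + 1)"
      using iter_comm_subgroup[OF S] subgroup_self iter_comm_subgroup[OF R] _ GUT UTG
      by (rule three_subgroup) (use iter_comm_normal[OF R, of "i + Suc j"] in simp)
    then show ?case by simp
  qed
qed

end

lemma card_image_factor:
  assumes fin: "finite (p ` A)"
    and factor: "\<And>a b. a \<in> A \<Longrightarrow> b \<in> A \<Longrightarrow> p a = p b \<Longrightarrow> f a = f b"
  shows "finite (f ` A) \<and> card (f ` A) \<le> card (p ` A)"
proof -
  have "f ` A \<subseteq> (\<lambda>z. f (inv_into A p z)) ` p ` A"
  proof
    fix w assume "w \<in> f ` A"
    then obtain a where a: "a \<in> A" "w = f a" by auto
    then have "f (inv_into A p (p a)) = f a"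
      by (intro factor) (auto intro: inv_into_into f_inv_into_f)
    then show "w \<in> (\<lambda>z. f (inv_into A p z)) ` p ` A" using a by force
  qed
  then show ?thesis using fin by (simp add: finite_surj surj_card_le)
qed

text \<open>The right cosets of \<open>H\<close> with representatives in \<open>A\<close>; for subgroups \<open>H \<le> A\<close> these are
  the elements of \<open>A/H\<close>.\<close>
definition rcosets_in :: "('a, 'b) monoid_scheme \<Rightarrow> 'a set \<Rightarrow> 'a set \<Rightarrow> 'a set set" where
  "rcosets_in G H A = (\<lambda>x. H #>\<^bsub>G\<^esub> x) ` A"

lemma carrier_FactGroup_subgroup:
  "carrier (G\<lparr>carrier := A\<rparr> Mod H) = rcosets_in G H A"
  unfolding FactGroup_def RCOSETS_def r_coset_def rcosets_in_def by auto

lemma (in group_hom) hom_commutator: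
  "x \<in> carrier G \<Longrightarrow> y \<in> carrier G \<Longrightarrow> h (commutator G x y) = commutator H (h x) (h y)"
  by (simp add: commutator_def hom_mult hom_inv)

lemma (in normal) rcoset_eq_self_iff:
  "x \<in> carrier G \<Longrightarrow> H #> x = H \<longleftrightarrow> x \<in> H"
  using rcos_self[OF _ subgroup_axioms] coset_join2[OF _ subgroup_axioms] by blast

lemma centerI:
  "z \<in> carrier G \<Longrightarrow> (\<And>g. g \<in> carrier G \<Longrightarrow> z \<otimes>\<^bsub>G\<^esub> g = g \<otimes>\<^bsub>G\<^esub> z) \<Longrightarrow> z \<in> center G"
  unfolding center_def by blast

lemma centerD:
  "z \<in> center G \<Longrightarrow> g \<in> carrier G \<Longrightarrow> z \<otimes>\<^bsub>G\<^esub> g = g \<otimes>\<^bsub>G\<^esub> z"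
  and center_carrier: "z \<in> center G \<Longrightarrow> z \<in> carrier G"
  unfolding center_def by blast+

context group
begin

lemma center_subgroup: "subgroup (center G) G"
proof (rule subgroupI)
  show "center G \<subseteq> carrier G" using center_carrier[of _ G] by blast
  have "\<one> \<in> center G" by (rule centerI) simp_all
  then show "center G \<noteq> {}" by blast
next
  fix z assume z: "z \<in> center G"
  note zc = center_carrier[OF z]
  show "inv z \<in> center G"
  proof (rule centerI)
    fix g assume g: "g \<in> carrier G"
    have "inv z \<otimes> g = inv z \<otimes> (g \<otimes> z) \<otimes> inv z" using zc g by (simp add: m_assoc)
    also have "\<dots> = inv z \<otimes> (z \<otimes> g) \<otimes> inv z" by (simp only: centerD[OF z g])
    also have "\<dots> = g \<otimes> inv z" using zc g by (simp add: word_simps)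
    finally show "inv z \<otimes> g = g \<otimes> inv z" .
  qed (simp add: zc)
next
  fix a b assume a: "a \<in> center G" and b: "b \<in> center G"
  note ac = center_carrier[OF a] and bc = center_carrier[OF b]
  show "a \<otimes> b \<in> center G"
  proof (rule centerI)
    fix g assume g: "g \<in> carrier G"
    have "a \<otimes> b \<otimes> g = a \<otimes> (g \<otimes> b)" using ac bc g by (simp add: m_assoc centerD[OF b g])
    also have "\<dots> = g \<otimes> (a \<otimes> b)" using ac bc g by (simp add: m_assoc[symmetric] centerD[OF a g])
    finally show "a \<otimes> b \<otimes> g = g \<otimes> (a \<otimes> b)" .
  qed (simp add: ac bc)
qed

lemma center_comm_group: "comm_group (G\<lparr>carrier := center G\<rparr>)"
proof -
  interpret Z: group "G\<lparr>carrier := center G\<rparr>"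
    by (rule subgroup_imp_group[OF center_subgroup])
  show ?thesis
  proof (rule Z.group_comm_groupI)
    fix x y assume "x \<in> carrier (G\<lparr>carrier := center G\<rparr>)" "y \<in> carrier (G\<lparr>carrier := center G\<rparr>)"
    then have "x \<in> center G" "y \<in> carrier G" using center_carrier by auto
    then have "x \<otimes> y = y \<otimes> x" by (rule centerD)
    then show "x \<otimes>\<^bsub>G\<lparr>carrier := center G\<rparr>\<^esub> y = y \<otimes>\<^bsub>G\<lparr>carrier := center G\<rparr>\<^esub> x" by simp
  qed
qed

lemma center_conj:
  assumes z: "z \<in> center G" and w: "w \<in> carrier G"
  shows "inv w \<otimes> z \<otimes> w = z"
proof -
  have "inv w \<otimes> z \<otimes> w = inv w \<otimes> (w \<otimes> z)"
    using z w by (simp add: m_assoc centerD[OF z w] center_carrier)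
  also have "\<dots> = z" using z w by (simp add: word_simps center_carrier)
  finally show ?thesis .
qed

lemma central_subgroup_normal:
  assumes B: "subgroup B G" and central: "B \<subseteq> center G"
  shows "B \<lhd> G"
proof -
  have "x \<otimes> b \<otimes> inv x = b" if x: "x \<in> carrier G" and b: "b \<in> B" for x b
  proof -
    have "x \<otimes> b = b \<otimes> x" using b x central centerD[of b G x] by auto
    then show ?thesis using x subgroup.mem_carrier[OF B b] by (simp add: m_assoc)
  qed
  then show ?thesis using B by (intro normal_invI) auto
qed

end

text \<open>Setting of the counting argument: subgroups \<open>U \<le> T\<close> of \<open>G\<close> with \<open>[T,G] \<le> U\<close>, and a
  surjective homomorphism \<open>h : G \<rightarrow> H\<close> killing \<open>[U,G]\<close> (in the application \<open>H = G/[U,G]\<close>).\<close>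
locale commutator_pairing = group_hom +
  fixes T U :: "'a set"
  assumes subgroup_T: "subgroup T G" and subgroup_U: "subgroup U G"
    and U_le_T: "U \<subseteq> T" and comm_T_le_U: "comm_subgroup G T (carrier G) \<subseteq> U"
    and comm_U_le_kernel: "comm_subgroup G U (carrier G) \<subseteq> kernel G H h"
    and surj_h: "h ` carrier G = carrier H"
begin

lemma T_carrier: "T \<subseteq> carrier G" and U_carrier: "U \<subseteq> carrier G"
  using subgroup_T subgroup_U by (simp_all add: subgroup.subset)

text \<open>\<open>h\<close> kills \<open>[U,G]\<close>, hence \<open>h(U)\<close> is central.\<close>
lemma h_commutator_U: "u \<in> U \<Longrightarrow> a \<in> carrier G \<Longrightarrow> h (commutator G u a) = \<one>\<^bsub>H\<^esub>"
  using comm_U_le_kernel G.commutator_in_comm_subgroup[of u U a "carrier G"]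
  unfolding kernel_def by blast

lemma h_U_central:
  assumes u: "u \<in> U" shows "h u \<in> center H"
proof (rule centerI)
  show "h u \<in> carrier H" using u U_carrier by auto
  fix g assume "g \<in> carrier H"
  then obtain a where a: "a \<in> carrier G" and g: "g = h a" using surj_h by auto
  have "commutator H (h u) (h a) = \<one>\<^bsub>H\<^esub>"
    using u a U_carrier h_commutator_U[OF u a] by (auto simp: hom_commutator[symmetric])
  then show "h u \<otimes>\<^bsub>H\<^esub> g = g \<otimes>\<^bsub>H\<^esub> h u"
    using u a U_carrier by (simp add: g H.commutator_eq_one_iff subset_iff)
qed

definition pairing :: "'a \<Rightarrow> 'a \<Rightarrow> 'c" where
  "pairing t a = h (commutator G t a)"

lemma pairing_central: "t \<in> T \<Longrightarrow> a \<in> carrier G \<Longrightarrow> pairing t a \<in> center H"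
  unfolding pairing_def
  by (rule h_U_central) (use comm_T_le_U G.commutator_in_comm_subgroup in blast)

lemma pairing_closed: "t \<in> T \<Longrightarrow> a \<in> carrier G \<Longrightarrow> pairing t a \<in> carrier H"
  by (rule center_carrier[OF pairing_central])

lemma pairing_mult_left:
  assumes "x \<in> T" "y \<in> T" "a \<in> carrier G"
  shows "pairing (x \<otimes> y) a = pairing x a \<otimes>\<^bsub>H\<^esub> pairing y a"
proof -
  have [simp]: "x \<in> carrier G" "y \<in> carrier G" using assms T_carrier by auto
  show ?thesis using assms pairing_central[of x a]
    by (simp add: pairing_def G.commutator_mult_left H.center_conj)
qed

lemma pairing_mult_right:
  assumes "t \<in> T" "a \<in> carrier G" "b \<in> carrier G"
  shows "pairing t (a \<otimes> b) = pairing t a \<otimes>\<^bsub>H\<^esub> pairing t b"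
proof -
  have "pairing t (a \<otimes> b) = pairing t b \<otimes>\<^bsub>H\<^esub> pairing t a"
    using assms T_carrier pairing_central[of t a]
    by (simp add: pairing_def G.commutator_mult_right H.center_conj subset_iff)
  also have "\<dots> = pairing t a \<otimes>\<^bsub>H\<^esub> pairing t b"
    using assms centerD[OF pairing_central[of t a] pairing_closed[of t b]] by simp
  finally show ?thesis .
qed

lemma pairing_vanishes: "u \<in> U \<Longrightarrow> a \<in> carrier G \<Longrightarrow> pairing u a = \<one>\<^bsub>H\<^esub>"
  unfolding pairing_def by (rule h_commutator_U)

lemma pairing_rcoset:
  assumes t: "t \<in> T" and t': "t' \<in> T" and eq: "U #> t = U #> t'" and a: "a \<in> carrier G"
  shows "pairing t a = pairing t' a"
proof -
  have "t' \<in> U #> t" using eq G.rcos_self[OF _ subgroup_U] t' T_carrier by auto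
  then obtain u where u: "u \<in> U" and t'_eq: "t' = u \<otimes> t" by (auto simp: r_coset_def)
  have "pairing t' a = pairing u a \<otimes>\<^bsub>H\<^esub> pairing t a"
    using u t a U_le_T by (auto simp: t'_eq pairing_mult_left)
  then show ?thesis using u a t by (simp add: pairing_vanishes pairing_closed)
qed

lemma pairing_one_left: "a \<in> carrier G \<Longrightarrow> pairing \<one> a = \<one>\<^bsub>H\<^esub>"
  using subgroup.one_closed[OF subgroup_U] by (rule pairing_vanishes)

lemma pairing_right_subgroup:
  assumes P: "subgroup P H"
  shows "subgroup {a \<in> carrier G. \<forall>t \<in> T. pairing t a \<in> P} G"
proof (rule G.subgroupI)
  show "{a \<in> carrier G. \<forall>t \<in> T. pairing t a \<in> P} \<noteq> {}"
    using subgroup.one_closed[OF P] T_carrier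
    by (auto simp: pairing_def subset_iff intro!: exI[of _ \<one>])
  fix a b assume a: "a \<in> {a \<in> carrier G. \<forall>t \<in> T. pairing t a \<in> P}"
    and b: "b \<in> {a \<in> carrier G. \<forall>t \<in> T. pairing t a \<in> P}"
  have "pairing t (inv a) = inv\<^bsub>H\<^esub> (pairing t a)" if t: "t \<in> T" for t
  proof -
    have "pairing t a \<otimes>\<^bsub>H\<^esub> pairing t (inv a) = pairing t (a \<otimes> inv a)"
      using a t by (intro pairing_mult_right[symmetric]) auto
    also have "\<dots> = \<one>\<^bsub>H\<^esub>" using a t T_carrier by (auto simp: pairing_def)
    finally have "pairing t a \<otimes>\<^bsub>H\<^esub> pairing t (inv a) = \<one>\<^bsub>H\<^esub>" .
    moreover have "pairing t a \<in> carrier H" "pairing t (inv a) \<in> carrier H"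
      using a t by (simp_all add: pairing_closed)
    ultimately show ?thesis by (metis H.inv_comm H.inv_equality)
  qed
  then show "inv a \<in> {a \<in> carrier G. \<forall>t \<in> T. pairing t a \<in> P}"
    using a by (simp add: subgroup.m_inv_closed[OF P])
  show "a \<otimes> b \<in> {a \<in> carrier G. \<forall>t \<in> T. pairing t a \<in> P}"
    using a b by (simp add: pairing_mult_right subgroup.m_closed[OF P])
qed auto

lemma image_comm_subgroup_le:
  assumes P: "subgroup P H" and vals: "\<And>t a. t \<in> T \<Longrightarrow> a \<in> carrier G \<Longrightarrow> pairing t a \<in> P"
  shows "h ` comm_subgroup G T (carrier G) \<subseteq> P"
proof -
  have "subgroup {w \<in> carrier G. h w \<in> P} G"
    using subgroup.subset[OF P] P
    by (intro G.subgroupI) (auto simp: subgroup.m_closed subgroup.m_inv_closed subgroup.one_closed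
        intro!: exI[of _ \<one>])
  then have "comm_subgroup G T (carrier G) \<subseteq> {w \<in> carrier G. h w \<in> P}"
    using vals T_carrier by (intro G.comm_subgroup_least) (auto simp: pairing_def)
  then show ?thesis by blast
qed

sublocale Z: comm_group "H\<lparr>carrier := center H\<rparr>"
  by (rule H.center_comm_group)

text \<open>Products \<open>\<Prod>\<^sub>i\<^sub><\<^sub>e pairing (ts i) (gs i)\<close> of pairing values against fixed elements \<open>gs i\<close>;
  they are taken in the abelian group \<open>Z(H)\<close>, which contains all pairing values.\<close>
definition pairing_prod :: "(nat \<Rightarrow> 'a) \<Rightarrow> nat \<Rightarrow> (nat \<Rightarrow> 'a) \<Rightarrow> 'c" where
  "pairing_prod gs e ts = finprod (H\<lparr>carrier := center H\<rparr>) (\<lambda>i. pairing (ts i) (gs i)) {..<e}"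

definition pairing_prods :: "(nat \<Rightarrow> 'a) \<Rightarrow> nat \<Rightarrow> 'c set" where
  "pairing_prods gs e = pairing_prod gs e ` {ts. \<forall>i<e. ts i \<in> T}"

lemma pairing_funcset:
  "(\<And>i. i < e \<Longrightarrow> gs i \<in> carrier G) \<Longrightarrow> \<forall>i<e. ts i \<in> T \<Longrightarrow>
    (\<lambda>i. pairing (ts i) (gs i)) \<in> {..<e} \<rightarrow> carrier (H\<lparr>carrier := center H\<rparr>)"
  by (auto intro: pairing_central)

text \<open>Products are multiplicative in the tuple, since the pairing is multiplicative in its first
  argument and \<open>Z(H)\<close> is abelian.\<close>
lemma pairing_prod_mult:
  assumes gs: "\<And>i. i < e \<Longrightarrow> gs i \<in> carrier G"
    and ts: "\<forall>i<e. ts i \<in> T" and ss: "\<forall>i<e. ss i \<in> T"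
  shows "pairing_prod gs e (\<lambda>i. ts i \<otimes> ss i) = pairing_prod gs e ts \<otimes>\<^bsub>H\<^esub> pairing_prod gs e ss"
proof -
  have "pairing_prod gs e (\<lambda>i. ts i \<otimes> ss i) = finprod (H\<lparr>carrier := center H\<rparr>)
      (\<lambda>i. pairing (ts i) (gs i) \<otimes>\<^bsub>H\<lparr>carrier := center H\<rparr>\<^esub> pairing (ss i) (gs i)) {..<e}"
    unfolding pairing_prod_def using gs ts ss
    by (intro Z.finprod_cong) (auto simp: pairing_mult_left Pi_def pairing_central
        intro!: subgroup.m_closed[OF H.center_subgroup])
  also have "\<dots> = pairing_prod gs e ts \<otimes>\<^bsub>H\<^esub> pairing_prod gs e ss"
    unfolding pairing_prod_def
    using Z.finprod_multf[OF pairing_funcset[of e gs ts] pairing_funcset[of e gs ss]] gs ts ss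
    by simp
  finally show ?thesis .
qed

lemma pairing_prod_one:
  "(\<And>i. i < e \<Longrightarrow> gs i \<in> carrier G) \<Longrightarrow> pairing_prod gs e (\<lambda>_. \<one>) = \<one>\<^bsub>H\<^esub>"
  unfolding pairing_prod_def using Z.finprod_one_eqI[of "{..<e}" "\<lambda>i. pairing \<one> (gs i)"]
  by (simp add: pairing_one_left)

lemma pairing_prods_subgroup:
  assumes gs: "\<And>i. i < e \<Longrightarrow> gs i \<in> carrier G"
  shows "subgroup (pairing_prods gs e) H"
proof (rule H.subgroupI)
  have closed: "pairing_prod gs e ts \<in> carrier H" if "\<forall>i<e. ts i \<in> T" for ts
    unfolding pairing_prod_def using Z.finprod_closed[OF pairing_funcset[of e gs ts, OF gs that]]
    by (simp add: center_carrier)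
  then show "pairing_prods gs e \<subseteq> carrier H" by (auto simp: pairing_prods_def)
  show "pairing_prods gs e \<noteq> {}"
    using subgroup.one_closed[OF subgroup_T]
    by (auto simp: pairing_prods_def intro!: exI[of _ "\<lambda>_. \<one>"])
  fix x y assume "x \<in> pairing_prods gs e" "y \<in> pairing_prods gs e"
  then obtain ts ss where ts: "\<forall>i<e. ts i \<in> T" and x: "x = pairing_prod gs e ts"
    and ss: "\<forall>i<e. ss i \<in> T" and y: "y = pairing_prod gs e ss"
    by (auto simp: pairing_prods_def)
  have prod: "\<forall>i<e. ts i \<otimes> ss i \<in> T" and inv: "\<forall>i<e. inv (ts i) \<in> T"
    using ts ss subgroup_T by (auto simp: subgroup.m_closed subgroup.m_inv_closed)
  have "x \<otimes>\<^bsub>H\<^esub> y = pairing_prod gs e (\<lambda>i. ts i \<otimes> ss i)"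
    unfolding x y by (rule pairing_prod_mult[of e gs ts ss, symmetric, OF gs ts ss])
  then show "x \<otimes>\<^bsub>H\<^esub> y \<in> pairing_prods gs e"
    using prod unfolding pairing_prods_def by blast
  have "pairing_prod gs e (\<lambda>i. inv (ts i)) \<otimes>\<^bsub>H\<^esub> x = pairing_prod gs e (\<lambda>i. inv (ts i) \<otimes> ts i)"
    unfolding x by (rule pairing_prod_mult[of e gs "\<lambda>i. inv (ts i)" ts, symmetric, OF gs inv ts])
  also have "\<dots> = pairing_prod gs e (\<lambda>_. \<one>)"
    using ts T_carrier unfolding pairing_prod_def
    by (intro Z.finprod_cong) (auto simp: subset_iff gs pairing_one_left Z.one_closed[simplified])
  also have "\<dots> = \<one>\<^bsub>H\<^esub>" by (rule pairing_prod_one[OF gs])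
  finally have "inv\<^bsub>H\<^esub> x = pairing_prod gs e (\<lambda>i. inv (ts i))"
    using closed[OF ts] closed[OF inv] unfolding x by (rule H.inv_equality)
  then show "inv\<^bsub>H\<^esub> x \<in> pairing_prods gs e"
    using inv unfolding pairing_prods_def by blast
qed

lemma pairing_in_prods:
  assumes gs: "\<And>i. i < e \<Longrightarrow> gs i \<in> carrier G" and i: "i < e" and t: "t \<in> T"
  shows "pairing t (gs i) \<in> pairing_prods gs e"
proof -
  let ?ts = "\<lambda>j. if j = i then t else \<one>"
  have ts: "\<forall>j<e. ?ts j \<in> T" using t subgroup.one_closed[OF subgroup_T] by auto
  have "pairing_prod gs e ?ts = finprod (H\<lparr>carrier := center H\<rparr>)
      (\<lambda>j. if i = j then pairing t (gs j) else \<one>\<^bsub>H\<lparr>carrier := center H\<rparr>\<^esub>) {..<e}"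
    unfolding pairing_prod_def
  proof (rule Z.finprod_cong')
    show "(\<lambda>j. if i = j then pairing t (gs j) else \<one>\<^bsub>H\<lparr>carrier := center H\<rparr>\<^esub>)
        \<in> {..<e} \<rightarrow> carrier (H\<lparr>carrier := center H\<rparr>)"
      using t Z.one_closed by (auto simp: pairing_central gs)
  qed (simp_all add: pairing_one_left gs)
  also have "\<dots> = pairing t (gs i)"
    using i t by (intro Z.finprod_singleton) (auto simp: pairing_central gs)
  finally have "pairing t (gs i) = pairing_prod gs e ?ts" ..
  with ts show ?thesis unfolding pairing_prods_def by blast
qed

text \<open>Since the pairing factors through \<open>T/U\<close>, there are at most \<open>|T/U|\<^sup>e\<close> such products.\<close>
lemma card_pairing_prods:
  assumes gs: "\<And>i. i < e \<Longrightarrow> gs i \<in> carrier G" and fin: "finite (rcosets_in G U T)"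
  shows "finite (pairing_prods gs e) \<and> card (pairing_prods gs e) \<le> card (rcosets_in G U T) ^ e"
proof -
  let ?Ts = "{ts. \<forall>i<e. ts i \<in> T}"
  let ?cosets = "\<lambda>ts. restrict (\<lambda>i. U #> ts i) {..<e}"
  have sub: "?cosets ` ?Ts \<subseteq> PiE {..<e} (\<lambda>_. rcosets_in G U T)"
    by (auto simp: rcosets_in_def)
  have finPi: "finite (PiE {..<e} (\<lambda>_. rcosets_in G U T))" using fin by (simp add: finite_PiE)
  have factor: "pairing_prod gs e ts = pairing_prod gs e ss"
    if ts: "ts \<in> ?Ts" and ss: "ss \<in> ?Ts" and eq: "?cosets ts = ?cosets ss" for ts ss
    unfolding pairing_prod_def
  proof (rule Z.finprod_cong')
    show "(\<lambda>i. pairing (ss i) (gs i)) \<in> {..<e} \<rightarrow> carrier (H\<lparr>carrier := center H\<rparr>)"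
      using ss by (auto simp: pairing_central gs)
    fix i assume "i \<in> {..<e}"
    then show "pairing (ts i) (gs i) = pairing (ss i) (gs i)"
      using ts ss fun_cong[OF eq, of i] by (intro pairing_rcoset) (auto simp: gs)
  qed simp
  have "finite (pairing_prods gs e) \<and> card (pairing_prods gs e) \<le> card (?cosets ` ?Ts)"
    unfolding pairing_prods_def using finite_subset[OF sub finPi] factor by (rule card_image_factor)
  moreover have "card (?cosets ` ?Ts) \<le> card (rcosets_in G U T) ^ e"
    using card_mono[OF finPi sub] by (simp add: card_PiE)
  ultimately show ?thesis by linarith
qed

lemma card_image_comm_le:
  assumes gs: "\<And>i. i < e \<Longrightarrow> gs i \<in> carrier G"
    and K: "K \<subseteq> carrier G" and TK: "\<And>t k. t \<in> T \<Longrightarrow> k \<in> K \<Longrightarrow> pairing t k = \<one>\<^bsub>H\<^esub>"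
    and gen: "generate G (K \<union> gs ` {..<e}) = carrier G"
    and fin: "finite (rcosets_in G U T)"
  shows "finite (h ` comm_subgroup G T (carrier G))
    \<and> card (h ` comm_subgroup G T (carrier G)) \<le> card (rcosets_in G U T) ^ e"
proof -
  let ?P = "pairing_prods gs e"
  have P: "subgroup ?P H" by (rule pairing_prods_subgroup[of e gs, OF gs])
  have "K \<subseteq> {a \<in> carrier G. \<forall>t \<in> T. pairing t a \<in> ?P}"
    using K TK subgroup.one_closed[OF P] by auto
  moreover have "gs ` {..<e} \<subseteq> {a \<in> carrier G. \<forall>t \<in> T. pairing t a \<in> ?P}"
    using gs pairing_in_prods[of e gs, OF gs] by auto
  ultimately have "K \<union> gs ` {..<e} \<subseteq> {a \<in> carrier G. \<forall>t \<in> T. pairing t a \<in> ?P}"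
    by (rule Un_least)
  then have "carrier G \<subseteq> {a \<in> carrier G. \<forall>t \<in> T. pairing t a \<in> ?P}"
    using G.generate_subgroup_incl[OF _ pairing_right_subgroup[OF P]] gen by blast
  then have sub: "h ` comm_subgroup G T (carrier G) \<subseteq> ?P"
    using P by (intro image_comm_subgroup_le) auto
  have finP: "finite ?P" and cardP: "card ?P \<le> card (rcosets_in G U T) ^ e"
    using card_pairing_prods[of e gs, OF gs fin] by auto
  show ?thesis
  proof
    show "finite (h ` comm_subgroup G T (carrier G))" by (rule finite_subset[OF sub finP])
    show "card (h ` comm_subgroup G T (carrier G)) \<le> card (rcosets_in G U T) ^ e"
      using card_mono[OF finP sub] cardP by linarith
  qed
qed

end

context group
begin

lemma comm_quotient_card_le:
  assumes T: "subgroup T G" and U: "subgroup U G" and UT: "U \<subseteq> T"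
    and TU: "comm_subgroup G T (carrier G) \<subseteq> U"
    and gs: "\<And>i. i < e \<Longrightarrow> gs i \<in> carrier G" and K: "K \<subseteq> carrier G"
    and TK: "\<And>t k. t \<in> T \<Longrightarrow> k \<in> K \<Longrightarrow> commutator G t k \<in> comm_subgroup G U (carrier G)"
    and gen: "generate G (K \<union> gs ` {..<e}) = carrier G"
    and fin: "finite (rcosets_in G U T)"
  shows "finite (rcosets_in G (comm_subgroup G U (carrier G)) (comm_subgroup G T (carrier G)))
    \<and> card (rcosets_in G (comm_subgroup G U (carrier G)) (comm_subgroup G T (carrier G)))
        \<le> card (rcosets_in G U T) ^ e"
proof -
  let ?N = "comm_subgroup G U (carrier G)"
  have N: "?N \<lhd> G" using subgroup.subset[OF U] by (rule comm_subgroup_normal)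
  have hom: "group_hom G (G Mod ?N) (\<lambda>x. ?N #> x)"
    using normal.factorgroup_is_group[OF N] normal.r_coset_hom_Mod[OF N] is_group
    by (simp add: group_hom_def group_hom_axioms_def)
  have kernel: "?N \<subseteq> kernel G (G Mod ?N) (\<lambda>x. ?N #> x)"
  proof
    fix x assume x: "x \<in> ?N"
    then have "x \<in> carrier G" by (rule subgroup.mem_carrier[OF normal_imp_subgroup[OF N]])
    with x show "x \<in> kernel G (G Mod ?N) (\<lambda>x. ?N #> x)"
      using normal.rcoset_eq_self_iff[OF N] by (simp add: kernel_def)
  qed
  interpret commutator_pairing G "G Mod ?N" "\<lambda>x. ?N #> x" T U
    using T U UT TU kernel
    by (intro commutator_pairing.intro[OF hom] commutator_pairing_axioms.intro)
      (simp_all add: carrier_FactGroup)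
  have "pairing t k = \<one>\<^bsub>G Mod ?N\<^esub>" if "t \<in> T" "k \<in> K" for t k
    using that TK T_carrier K normal.rcoset_eq_self_iff[OF N]
    by (auto simp: pairing_def subset_iff)
  then show ?thesis
    using card_image_comm_le[of e gs, OF gs K _ gen fin] by (simp add: rcosets_in_def)
qed

text \<open>If \<open>S = \<langle>s\<^sub>0\<rangle>R\<close>, then \<open>[S,S] \<le> [R,G]\<close>: modulo \<open>[R,G]\<close>, \<open>R\<close> is central and the powers of \<open>s\<^sub>0\<close>
  commute with each other.\<close>
lemma commutator_cyclic_mod:
  assumes R: "subgroup R G" and s0: "s0 \<in> carrier G"
    and S_cyclic: "\<And>s. s \<in> S \<Longrightarrow> \<exists>n::int. \<exists>r \<in> R. s = s0 [^] n \<otimes> r"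
    and "s \<in> S" "t \<in> S"
  shows "commutator G s t \<in> comm_subgroup G R (carrier G)"
proof -
  let ?N = "comm_subgroup G R (carrier G)"
  interpret N: normal ?N G using subgroup.subset[OF R] by (rule comm_subgroup_normal)
  obtain n r where s: "s = s0 [^] (n::int) \<otimes> r" and r: "r \<in> R"
    using S_cyclic[OF \<open>s \<in> S\<close>] by blast
  obtain m r' where t: "t = s0 [^] (m::int) \<otimes> r'" and r': "r' \<in> R"
    using S_cyclic[OF \<open>t \<in> S\<close>] by blast
  define a b where "a = s0 [^] n" and "b = s0 [^] m"
  have [simp]: "a \<in> carrier G" "b \<in> carrier G" "r \<in> carrier G" "r' \<in> carrier G"
    using s0 r r' R by (auto simp: a_def b_def subgroup.mem_carrier)
  have tc: "t \<in> carrier G" by (simp add: t b_def[symmetric])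
  have "a \<otimes> b = b \<otimes> a"
    using s0 by (simp add: a_def b_def int_pow_mult[symmetric] add.commute)
  then have ab: "commutator G a b = \<one>" by (simp add: commutator_eq_one_iff)
  have "commutator G a t = commutator G a r'"
    using ab by (simp add: t b_def[symmetric] commutator_mult_right)
  also have "\<dots> = inv (commutator G r' a)" by (simp add: inv_commutator)
  finally have "commutator G a t \<in> ?N"
    using r' by (simp add: commutator_in_comm_subgroup)
  moreover have "commutator G r t \<in> ?N" using r tc by (rule commutator_in_comm_subgroup)
  moreover have "commutator G s t = (inv r \<otimes> commutator G a t \<otimes> r) \<otimes> commutator G r t"
    using tc by (simp add: s a_def[symmetric] commutator_mult_left)
  ultimately show ?thesis by (simp add: N.inv_op_closed1)
qed

lemma generate_cyclic_mod:
  assumes R: "R \<subseteq> carrier G" and s0: "s0 \<in> carrier G"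
    and S_cyclic: "\<And>s. s \<in> S \<Longrightarrow> \<exists>n::int. \<exists>r \<in> R. s = s0 [^] n \<otimes> r"
    and gs: "\<And>i. i < d \<Longrightarrow> gs i \<in> carrier G" and gen: "generate G (S \<union> gs ` {..<d}) = carrier G"
  shows "generate G (R \<union> gs(d := s0) ` {..<Suc d}) = carrier G"
proof -
  let ?W = "generate G (R \<union> gs(d := s0) ` {..<Suc d})"
  have W: "subgroup ?W G" using R s0 gs by (intro generate_is_subgroup) auto
  have "S \<subseteq> ?W"
  proof
    fix s assume "s \<in> S"
    then obtain n r where r: "r \<in> R" and s_eq: "s = s0 [^] (n::int) \<otimes> r" using S_cyclic by blast
    have "s0 \<in> ?W" by (rule generate.incl) auto
    moreover have "r \<in> ?W" using r by (intro generate.incl) simp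
    ultimately show "s \<in> ?W"
      using W by (simp add: s_eq subgroup.m_closed subgroup_int_pow_closed)
  qed
  moreover have "gs ` {..<d} \<subseteq> ?W" by (auto intro!: generate.incl)
  ultimately have "generate G (S \<union> gs ` {..<d}) \<subseteq> ?W"
    by (intro generate_subgroup_incl[OF _ W]) simp
  moreover have "?W \<subseteq> carrier G" using W by (rule subgroup.subset)
  ultimately show ?thesis using gen by simp
qed

text \<open>For \<open>j = 0\<close> this is the counting lemma with \<open>K = S\<close>; for the induction step it is applied with
  \<open>K = R\<close> and the \<open>d + 1\<close> generators \<open>gs 0, \<dots>, gs (d - 1), s\<^sub>0\<close>.\<close>
lemma iter_comm_quotient_card_le:
  assumes R: "subgroup R G" and S: "subgroup S G" and RS: "R \<subseteq> S"
    and SG: "comm_subgroup G S (carrier G) \<subseteq> R"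
    and s0: "s0 \<in> S" and S_cyclic: "\<And>s. s \<in> S \<Longrightarrow> \<exists>n::int. \<exists>r \<in> R. s = s0 [^] n \<otimes> r"
    and gs: "\<And>i. i < d \<Longrightarrow> gs i \<in> carrier G" and gen: "generate G (S \<union> gs ` {..<d}) = carrier G"
    and fin: "finite (rcosets_in G R S)" and card: "card (rcosets_in G R S) \<le> m"
  shows "finite (rcosets_in G (iter_comm G R (Suc j) (carrier G)) (iter_comm G S (Suc j) (carrier G)))
    \<and> card (rcosets_in G (iter_comm G R (Suc j) (carrier G)) (iter_comm G S (Suc j) (carrier G)))
        \<le> m ^ (d * (d + 1) ^ j)"
proof (induction j)
  let ?T = "\<lambda>j. iter_comm G S j (carrier G)" and ?U = "\<lambda>j. iter_comm G R j (carrier G)"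
  case 0
  have "commutator G s t \<in> comm_subgroup G R (carrier G)" if "s \<in> S" "t \<in> S" for s t
    using R subgroup.mem_carrier[OF S s0] S_cyclic that by (rule commutator_cyclic_mod)
  from comm_quotient_card_le[OF S R RS SG, of d gs, OF gs subgroup.subset[OF S] this gen fin]
  have "finite (rcosets_in G (?U 1) (?T 1))"
    and "card (rcosets_in G (?U 1) (?T 1)) \<le> card (rcosets_in G R S) ^ d" by simp_all
  moreover have "card (rcosets_in G R S) ^ d \<le> m ^ d" using card by (rule power_mono) simp
  ultimately show ?case by simp
next
  let ?T = "\<lambda>j. iter_comm G S j (carrier G)" and ?U = "\<lambda>j. iter_comm G R j (carrier G)"
  case (Suc j)
  have gs': "\<And>i. i < Suc d \<Longrightarrow> (gs(d := s0)) i \<in> carrier G"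
    using gs subgroup.mem_carrier[OF S s0] by simp
  have TU: "comm_subgroup G (?T (Suc j)) (carrier G) \<subseteq> ?U (Suc j)"
    using iter_comm_Suc_le[OF SG, of "Suc j"] by simp
  have TR: "commutator G t r \<in> comm_subgroup G (?U (Suc j)) (carrier G)"
    if "t \<in> ?T (Suc j)" "r \<in> R" for t r
  proof -
    have "commutator G t r \<in> comm_subgroup G (?T (Suc j)) (?U 0)"
      using that by (simp add: commutator_in_comm_subgroup)
    then show ?thesis using comm_iter_comm_le[OF S R, of "Suc j" 0] by (simp add: subset_iff)
  qed
  have exponent: "(m ^ (d * (d + 1) ^ j)) ^ Suc d = m ^ (d * (d + 1) ^ Suc j)"
  proof -
    have "d * (d + 1) ^ j * Suc d = d * (d + 1) ^ Suc j" by (simp add: algebra_simps)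
    then show ?thesis by (simp only: power_mult[symmetric])
  qed
  from comm_quotient_card_le[OF iter_comm_subgroup[OF S] iter_comm_subgroup[OF R]
      iter_comm_mono[OF RS] TU, of "Suc d" "gs(d := s0)", OF gs' subgroup.subset[OF R] TR
      generate_cyclic_mod[OF subgroup.subset[OF R] subgroup.mem_carrier[OF S s0] S_cyclic gs gen]
      Suc.IH[THEN conjunct1]]
  have "finite (rcosets_in G (?U (Suc (Suc j))) (?T (Suc (Suc j))))"
    and "card (rcosets_in G (?U (Suc (Suc j))) (?T (Suc (Suc j))))
        \<le> card (rcosets_in G (?U (Suc j)) (?T (Suc j))) ^ Suc d" by simp_all
  moreover have "card (rcosets_in G (?U (Suc j)) (?T (Suc j))) ^ Suc d
      \<le> (m ^ (d * (d + 1) ^ j)) ^ Suc d"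
    using Suc.IH[THEN conjunct2] by (rule power_mono) simp
  ultimately show ?case unfolding exponent by (blast intro: le_trans)
qed

end

context group_hom
begin

lemma preimage_subgroup:
  assumes B: "subgroup B H" shows "subgroup {x \<in> carrier G. h x \<in> B} G"
  using B by (intro G.subgroupI) (auto simp: subgroup.m_closed subgroup.m_inv_closed subgroup.one_closed)

lemma kernel_subset_preimage:
  assumes B: "subgroup B H" shows "kernel G H h \<subseteq> {x \<in> carrier G. h x \<in> B}"
  using subgroup.one_closed[OF B] by (auto simp: kernel_def)

lemma comm_preimage_central:
  assumes central: "B \<subseteq> center H"
  shows "comm_subgroup G {x \<in> carrier G. h x \<in> B} (carrier G) \<subseteq> kernel G H h"
proof (rule G.comm_subgroup_least[OF subgroup_kernel])
  fix s a assume s: "s \<in> {x \<in> carrier G. h x \<in> B}" and a: "a \<in> carrier G"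
  then have "h s \<otimes>\<^bsub>H\<^esub> h a = h a \<otimes>\<^bsub>H\<^esub> h s" using central centerD[of "h s" H "h a"] by auto
  then show "commutator G s a \<in> kernel G H h"
    using s a by (simp add: kernel_def hom_commutator H.commutator_eq_one_iff)
qed

lemma preimage_cyclic:
  assumes B: "subgroup B H" and cyclic: "cyclic_group (H\<lparr>carrier := B\<rparr>)"
    and surj: "h ` carrier G = carrier H"
  obtains s0 where "s0 \<in> {x \<in> carrier G. h x \<in> B}"
    and "\<And>s. s \<in> {x \<in> carrier G. h x \<in> B} \<Longrightarrow>
      \<exists>n::int. \<exists>r \<in> kernel G H h. s = s0 [^] n \<otimes> r"
proof -
  interpret B: group "H\<lparr>carrier := B\<rparr>" by (rule H.subgroup_imp_group[OF B])
  obtain b0 where b0: "b0 \<in> B" and B_eq: "B = range (\<lambda>n::int. b0 [^]\<^bsub>H\<lparr>carrier := B\<rparr>\<^esub> n)"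
    using cyclic by (auto simp: B.cyclic_group)
  have b0_pow: "\<exists>n::int. b = b0 [^]\<^bsub>H\<^esub> n" if "b \<in> B" for b
    using that B_eq H.int_pow_consistent[OF B b0] by auto
  obtain s0 where s0: "s0 \<in> carrier G" "h s0 = b0"
    using surj b0 subgroup.mem_carrier[OF B b0] by (metis imageE)
  show ?thesis
  proof
    show "s0 \<in> {x \<in> carrier G. h x \<in> B}" using s0 b0 by simp
    fix s assume s: "s \<in> {x \<in> carrier G. h x \<in> B}"
    then obtain n :: int where n: "h s = b0 [^]\<^bsub>H\<^esub> n" using b0_pow by auto
    define r where "r = inv (s0 [^] n) \<otimes> s"
    have "h r = \<one>\<^bsub>H\<^esub>"
      using s s0 n subgroup.mem_carrier[OF B b0] by (simp add: r_def hom_int_pow)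
    then have "r \<in> kernel G H h" using s s0 by (simp add: r_def kernel_def)
    moreover have "s = s0 [^] n \<otimes> r" using s s0 by (simp add: r_def G.word_simps)
    ultimately show "\<exists>n::int. \<exists>r \<in> kernel G H h. s = s0 [^] n \<otimes> r" by blast
  qed
qed

lemma card_preimage_cosets:
  assumes B: "subgroup B H" and fin: "finite B"
  shows "finite (rcosets_in G (kernel G H h) {x \<in> carrier G. h x \<in> B})
    \<and> card (rcosets_in G (kernel G H h) {x \<in> carrier G. h x \<in> B}) \<le> card B"
proof -
  let ?S = "{x \<in> carrier G. h x \<in> B}"
  have "finite (h ` ?S)" using fin by (rule finite_subset[rotated]) auto
  moreover have "kernel G H h #> a = kernel G H h #> b"
    if "a \<in> ?S" "b \<in> ?S" "h a = h b" for a b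
  proof -
    have "h (a \<otimes> inv b) = \<one>\<^bsub>H\<^esub>" using that by simp
    then have "a \<otimes> inv b \<in> kernel G H h" using that by (simp add: kernel_def)
    then have "a \<in> kernel G H h #> b"
      using subgroup.rcos_module_rev[OF subgroup_kernel G.is_group] that by simp
    then show ?thesis using G.repr_independence[OF _ _ subgroup_kernel] that by simp
  qed
  ultimately have "finite (rcosets_in G (kernel G H h) ?S)
      \<and> card (rcosets_in G (kernel G H h) ?S) \<le> card (h ` ?S)"
    unfolding rcosets_in_def by (rule card_image_factor)
  moreover have "card (h ` ?S) \<le> card B" using fin by (intro card_mono) auto
  ultimately show ?thesis by linarith
qed

lemma generate_kernel_lift:
  assumes surj: "h ` carrier G = carrier H" and L: "L \<subseteq> carrier G"
    and gen: "generate H (h ` L) = carrier H"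
  shows "generate G (kernel G H h \<union> L) = carrier G"
proof -
  let ?W = "generate G (kernel G H h \<union> L)"
  have W: "subgroup ?W G" using L by (intro G.generate_is_subgroup) (auto simp: kernel_def)
  have "L \<subseteq> ?W" using generate.incl[of _ "kernel G H h \<union> L" G] by blast
  then have "h ` L \<subseteq> h ` ?W" by (rule image_mono)
  then have "generate H (h ` L) \<subseteq> h ` ?W"
    by (rule H.generate_subgroup_incl[OF _ subgroup_img_is_subgroup[OF W]])
  then have hW: "carrier H \<subseteq> h ` ?W" by (simp only: gen)
  have "carrier G \<subseteq> ?W"
  proof
    fix x assume x: "x \<in> carrier G"
    have "h x \<in> h ` ?W" using hW hom_closed[OF x] by blast
    then obtain w where w: "w \<in> ?W" and hx: "h x = h w" by blast
    have wc: "w \<in> carrier G" by (rule subgroup.mem_carrier[OF W w])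
    have "h (x \<otimes> inv w) = \<one>\<^bsub>H\<^esub>" using x wc by (simp add: hx)
    then have "x \<otimes> inv w \<in> ?W" using x wc by (intro generate.incl UnI1) (simp add: kernel_def)
    then have "x \<otimes> inv w \<otimes> w \<in> ?W" using w W by (simp add: subgroup.m_closed)
    then show "x \<in> ?W" using x wc by (simp add: G.m_assoc)
  qed
  then show ?thesis using subgroup.subset[OF W] by blast
qed

text \<open>Generators of \<open>H/B\<close> lift to elements of \<open>G\<close> which, together with the preimage of \<open>B\<close>,
  generate \<open>G\<close>: the preimage of \<open>B\<close> is the kernel of \<open>G \<rightarrow> H/B\<close>.\<close>
lemma preimage_generators:
  assumes B: "B \<lhd> H" and surj: "h ` carrier G = carrier H"
    and gl: "set gl \<subseteq> carrier (H Mod B)" "generate (H Mod B) (set gl) = carrier (H Mod B)"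
  obtains lf where "\<And>i. i < length gl \<Longrightarrow> lf i \<in> carrier G"
    and "generate G ({x \<in> carrier G. h x \<in> B} \<union> lf ` {..<length gl}) = carrier G"
proof -
  define phi where "phi = (\<lambda>x. B #>\<^bsub>H\<^esub> h x)"
  interpret HB: group "H Mod B" by (rule normal.factorgroup_is_group[OF B])
  interpret phi: group_hom G "H Mod B" phi
    using Group.hom_compose[OF homh normal.r_coset_hom_Mod[OF B]]
    by (unfold_locales) (simp_all add: phi_def comp_def)
  have phi_surj: "phi ` carrier G = carrier (H Mod B)"
    unfolding phi_def carrier_FactGroup surj[symmetric] by (simp add: image_image)
  have "phi x = \<one>\<^bsub>H Mod B\<^esub> \<longleftrightarrow> h x \<in> B" if "x \<in> carrier G" for x
    using that normal.rcoset_eq_self_iff[OF B, of "h x"] by (simp add: phi_def)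
  then have kernel_phi: "kernel G (H Mod B) phi = {x \<in> carrier G. h x \<in> B}"
    by (auto simp: kernel_def)
  define lf where "lf = (\<lambda>i. SOME f. f \<in> carrier G \<and> phi f = gl ! i)"
  have lf: "lf i \<in> carrier G \<and> phi (lf i) = gl ! i" if "i < length gl" for i
  proof -
    have "gl ! i \<in> phi ` carrier G" using nth_mem[OF that] gl(1) phi_surj by blast
    then have "\<exists>f. f \<in> carrier G \<and> phi f = gl ! i" by blast
    then show ?thesis unfolding lf_def by (rule someI_ex)
  qed
  have "phi ` lf ` {..<length gl} = nth gl ` {..<length gl}"
    unfolding image_image by (rule image_cong) (simp_all add: lf)
  also have "\<dots> = set gl" using nth_image[of "length gl" gl] by (simp add: atLeast0LessThan)
  finally have "generate (H Mod B) (phi ` lf ` {..<length gl}) = carrier (H Mod B)"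
    using gl(2) by simp
  then have "generate G (kernel G (H Mod B) phi \<union> lf ` {..<length gl}) = carrier G"
    using lf by (intro phi.generate_kernel_lift[OF phi_surj]) auto
  with lf show ?thesis using that unfolding kernel_phi by blast
qed

lemma preimage_iter_comm_card_le:
  assumes surj: "h ` carrier G = carrier H"
    and B: "subgroup B H" and central: "B \<subseteq> center H" and cyclic: "cyclic_group (H\<lparr>carrier := B\<rparr>)"
    and fin: "finite B"
    and gl: "length gl = d" "set gl \<subseteq> carrier (H Mod B)" "generate (H Mod B) (set gl) = carrier (H Mod B)"
  shows "finite (rcosets_in G (iter_comm G (kernel G H h) (Suc j) (carrier G))
                              (iter_comm G {x \<in> carrier G. h x \<in> B} (Suc j) (carrier G)))
    \<and> card (rcosets_in G (iter_comm G (kernel G H h) (Suc j) (carrier G))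
                         (iter_comm G {x \<in> carrier G. h x \<in> B} (Suc j) (carrier G)))
        \<le> card B ^ (d * (d + 1) ^ j)"
proof -
  obtain s0 where s0: "s0 \<in> {x \<in> carrier G. h x \<in> B}"
    and S_cyclic: "\<And>s. s \<in> {x \<in> carrier G. h x \<in> B} \<Longrightarrow>
      \<exists>n::int. \<exists>r \<in> kernel G H h. s = s0 [^] n \<otimes> r"
    using preimage_cyclic[OF B cyclic surj] by blast
  obtain lf where lf: "\<And>i. i < d \<Longrightarrow> lf i \<in> carrier G"
    and gen: "generate G ({x \<in> carrier G. h x \<in> B} \<union> lf ` {..<d}) = carrier G"
    using preimage_generators[OF H.central_subgroup_normal[OF B central] surj gl(2,3)] gl(1) by blast
  show ?thesis
    using card_preimage_cosets[OF B fin]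
    by (intro G.iter_comm_quotient_card_le[OF subgroup_kernel preimage_subgroup[OF B]
        kernel_subset_preimage[OF B] comm_preimage_central[OF central] s0 S_cyclic lf gen]) simp_all
qed

end

theorem mainTheorem2:
  fixes G :: "('g, 'c) monoid_scheme" and F :: "('f, 'e) monoid_scheme"
    and p k d c n :: nat and B :: "'g set" and h :: "'f \<Rightarrow> 'g"
  assumes "Factorial_Ring.prime p" and "c \<ge> 1"
    and "group G" and "finite (carrier G)" and "order G = p ^ n"
    and "subgroup B G" and "B \<subseteq> center G"
    and "cyclic_group (G\<lparr>carrier := B\<rparr>)" and "card B = p ^ k"
    and "\<exists>gs. length gs = d \<and> set gs \<subseteq> carrier (G Mod B)
              \<and> generate (G Mod B) (set gs) = carrier (G Mod B)"
    and "free_group F"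
    and "h \<in> hom F G" and "h ` carrier F = carrier G"
    and "R = kernel F G h"
    and "S = {x \<in> carrier F. h x \<in> B}"
  shows "finite (carrier ((F\<lparr>carrier := iter_comm F S c (carrier F)\<rparr>) Mod (iter_comm F R c (carrier F))))
    \<and> order ((F\<lparr>carrier := iter_comm F S c (carrier F)\<rparr>) Mod (iter_comm F R c (carrier F)))
        \<le> p ^ (d * k * (d + 1) ^ (c - 1))"
proof -
  have "group F" using \<open>free_group F\<close> unfolding free_group_def free_group_on_def by blast
  then interpret h: group_hom F G h
    using \<open>group G\<close> \<open>h \<in> hom F G\<close> by (simp add: group_hom_def group_hom_axioms_def)
  obtain gl where gl: "length gl = d" "set gl \<subseteq> carrier (G Mod B)"
    "generate (G Mod B) (set gl) = carrier (G Mod B)" using assms(10) by blast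
  have "finite B" using \<open>finite (carrier G)\<close> subgroup.subset[OF \<open>subgroup B G\<close>] by (rule finite_subset[rotated])
  obtain j where c: "c = Suc j" using \<open>c \<ge> 1\<close> by (cases c) auto
  have "card B ^ (d * (d + 1) ^ j) = p ^ (d * k * (d + 1) ^ (c - 1))"
    using \<open>card B = p ^ k\<close> by (simp add: c power_mult[symmetric] ac_simps)
  with h.preimage_iter_comm_card_le[OF \<open>h ` carrier F = carrier G\<close> \<open>subgroup B G\<close> \<open>B \<subseteq> center G\<close>
      \<open>cyclic_group _\<close> \<open>finite B\<close> gl, of j]
  show ?thesis
    unfolding order_def carrier_FactGroup_subgroup c \<open>R = _\<close> \<open>S = _\<close> by simp
qed

end
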